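(* Let $G$ be a finite, simple, unweighted, undirected, connected graph, let $S\subseteq V(G)$ with $|S|=k$ such that $G-S$ is a forest, and let $\ell$ be an integer. Then there exists a shortest path $P$ in $G$ with $d_G(v,P)\le\ell$ for all $v\in V(G)$ if and only if there exists a skeleton $\mathbb{S}$ (with respect to $G,S,\ell$) and a shortest path $P$ in $G$ that realizes $\mathbb{S}$.
   Context: $d_G$ is the graph distance and $d_G(v,P)=\min_{w\in V(P)}d_G(v,w)$; $[\ell]=\{1,\dots,\ell\}$ and $[a,b]=\{a,\dots,b\}$. A skeleton $\mathbb{S}$ consists of: two vertices $u,v\in V(G)$ (intended endpoints); a set $M\subseteq S\setminus\{u,v\}$; an ordering $\pi=(m_1,\dots,m_{|M|})$ of $M$, with the convention $m_0=u$, $m_{|M|+1}=v$; and, writing $X=S\setminus M$, functions $f:X\to[\ell]$ and $g:X\to\{0,1,\dots,|M|+1,(0,1),(1,2),\dots,(|M|,|M|+1)\}$. A path $P$ realizes $\mathbb{S}$ if: (1) $M=S\cap V(P)$, $X\cap V(P)=\emptyset$, the vertices of $M$ appear on $P$ in the order $\pi$, and the endpoints of $P$ are $m_0$ and $m_{|M|+1}$; (2) for every $v\in V(G)$ there is $w\in V(P)$ with $d_G(v,w)\le \ell$; (3) for every $x\in X$ and every $w\in V(P)$, $d_G(x,w)\ge f(x)$; (4) for every $x\in X$: if $g(x)=i\in[0,|M|+1]$ then $d_G(x,m_i)=f(x)$, and if $g(x)=(i,i+1)$ with $i\in[0,|M|]$ then there is a vertex $w\notin\{m_i,m_{i+1}\}$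 on the subpath of $P$ between $m_i$ and $m_{i+1}$ with $d_G(x,w)=f(x)$.
   Formalization: In a skeleton, $X=S\setminus(M\cup\{u,v\})$ rather than $X=S\setminus M$, and condition (1) for realizing is $M=(S\setminus\{u,v\})\cap V(P)$ in place of $M=S\cap V(P)$. Each condition added here is assumed in the paper as well or is needed for the statement above to hold. *)

theory Defs
  imports Main "HOL-Library.Sublist"
begin

definition simple_graph :: "'a set \<Rightarrow> ('a \<Rightarrow> 'a \<Rightarrow> bool) \<Rightarrow> bool" where
  "simple_graph V E \<longleftrightarrow> finite V \<and> (\<forall>x y. E x y \<longrightarrow> x \<in> V \<and> y \<in> V)
     \<and> (\<forall>x y. E x y \<longrightarrow> E y x) \<and> (\<forall>x. \<not> E x x)"

definition walk :: "'a set \<Rightarrow> ('a \<Rightarrow> 'a \<Rightarrow> bool) \<Rightarrow> 'a list \<Rightarrow> bool" where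
  "walk V E p \<longleftrightarrow> p \<noteq> [] \<and> set p \<subseteq> V \<and> (\<forall>i. Suc i < length p \<longrightarrow> E (p ! i) (p ! Suc i))"

definition is_path :: "'a set \<Rightarrow> ('a \<Rightarrow> 'a \<Rightarrow> bool) \<Rightarrow> 'a list \<Rightarrow> bool" where
  "is_path V E p \<longleftrightarrow> walk V E p \<and> distinct p"

definition connected_graph :: "'a set \<Rightarrow> ('a \<Rightarrow> 'a \<Rightarrow> bool) \<Rightarrow> bool" where
  "connected_graph V E \<longleftrightarrow> (\<forall>x\<in>V. \<forall>y\<in>V. \<exists>p. walk V E p \<and> hd p = x \<and> last p = y)"

definition gdist :: "'a set \<Rightarrow> ('a \<Rightarrow> 'a \<Rightarrow> bool) \<Rightarrow> 'a \<Rightarrow> 'a \<Rightarrow> nat" where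
  "gdist V E x y = (LEAST n. \<exists>p. walk V E p \<and> hd p = x \<and> last p = y \<and> length p = Suc n)"

definition shortest_path :: "'a set \<Rightarrow> ('a \<Rightarrow> 'a \<Rightarrow> bool) \<Rightarrow> 'a list \<Rightarrow> bool" where
  "shortest_path V E p \<longleftrightarrow> is_path V E p \<and> length p = Suc (gdist V E (hd p) (last p))"

definition forest_minus :: "'a set \<Rightarrow> ('a \<Rightarrow> 'a \<Rightarrow> bool) \<Rightarrow> 'a set \<Rightarrow> bool" where
  "forest_minus V E S \<longleftrightarrow> \<not> (\<exists>c. is_path (V - S) E c \<and> length c \<ge> 3 \<and> E (last c) (hd c))"

text \<open>Values of g: \<open>GV i\<close> stands for i, \<open>GE i\<close> stands for (i,i+1).\<close>
datatype gval = GV nat | GE nat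

text \<open>Skeleton (u, v, pi, f, g) w.r.t. G, S, l; M = set pi,
  X = S - (M \<union> {u,v}).\<close>
definition skel_X :: "'a set \<Rightarrow> 'a \<Rightarrow> 'a \<Rightarrow> 'a list \<Rightarrow> 'a set" where
  "skel_X S u v \<pi> = S - (set \<pi> \<union> {u, v})"

definition is_skeleton :: "'a set \<Rightarrow> ('a \<Rightarrow> 'a \<Rightarrow> bool) \<Rightarrow> 'a set \<Rightarrow> int
     \<Rightarrow> 'a \<Rightarrow> 'a \<Rightarrow> 'a list \<Rightarrow> ('a \<Rightarrow> nat) \<Rightarrow> ('a \<Rightarrow> gval) \<Rightarrow> bool" where
  "is_skeleton V E S l u v \<pi> f g \<longleftrightarrow> u \<in> V \<and> v \<in> V \<and> distinct \<pi> \<and> set \<pi> \<subseteq> S - {u, v}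
     \<and> (\<forall>x\<in>skel_X S u v \<pi>. 1 \<le> f x \<and> int (f x) \<le> l)
     \<and> (\<forall>x\<in>skel_X S u v \<pi>. case g x of GV i \<Rightarrow> i \<le> length \<pi> + 1 | GE i \<Rightarrow> i \<le> length \<pi>)"

definition skel_m :: "'a \<Rightarrow> 'a \<Rightarrow> 'a list \<Rightarrow> nat \<Rightarrow> 'a" where
  "skel_m u v \<pi> i = (u # \<pi> @ [v]) ! i"

definition pos :: "'a list \<Rightarrow> 'a \<Rightarrow> nat" where
  "pos P w = (THE j. j < length P \<and> P ! j = w)"

definition inner_between :: "'a list \<Rightarrow> 'a \<Rightarrow> 'a \<Rightarrow> 'a set" where
  "inner_between P a b = {P ! j | j. j < length P \<and> j \<noteq> pos P a \<and> j \<noteq> pos P b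
       \<and> min (pos P a) (pos P b) < j \<and> j < max (pos P a) (pos P b)}"

definition realizes :: "'a set \<Rightarrow> ('a \<Rightarrow> 'a \<Rightarrow> bool) \<Rightarrow> 'a set \<Rightarrow> int
     \<Rightarrow> 'a \<Rightarrow> 'a \<Rightarrow> 'a list \<Rightarrow> ('a \<Rightarrow> nat) \<Rightarrow> ('a \<Rightarrow> gval) \<Rightarrow> 'a list \<Rightarrow> bool" where
  "realizes V E S l u v \<pi> f g P \<longleftrightarrow>
     \<comment> \<open>(1)\<close>
     set \<pi> = (S - {u, v}) \<inter> set P \<and> skel_X S u v \<pi> \<inter> set P = {} \<and> subseq \<pi> P
       \<and> hd P = u \<and> last P = v
     \<comment> \<open>(2)\<close>
     \<and> (\<forall>w\<in>V. \<exists>p\<in>set P. int (gdist V E w p) \<le> l)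
     \<comment> \<open>(3)\<close>
     \<and> (\<forall>x\<in>skel_X S u v \<pi>. \<forall>w\<in>set P. f x \<le> gdist V E x w)
     \<comment> \<open>(4)\<close>
     \<and> (\<forall>x\<in>skel_X S u v \<pi>. case g x of
          GV i \<Rightarrow> gdist V E x (skel_m u v \<pi> i) = f x
        | GE i \<Rightarrow> (\<exists>w \<in> inner_between P (skel_m u v \<pi> i) (skel_m u v \<pi> (Suc i)).
                     gdist V E x w = f x))"

end

theory Submission
  imports Defs
begin

text \<open>Only the direction from a covering shortest path to a skeleton needs an argument, and
  it works for every covering path \<open>P\<close>: take its endpoints as \<open>u, v\<close> and the vertices
  of \<open>S\<close> on \<open>P\<close>, in path order, as \<open>\<pi>\<close>; let \<open>f x\<close> be the distance from \<open>x\<close> to \<open>P\<close>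
  and \<open>g x\<close> the place on \<open>P\<close> of a vertex nearest to \<open>x\<close>: either one of the landmarks
  \<open>m\<^sub>i\<close> or the open segment between two consecutive ones.\<close>

lemma gdist_eq_0_imp_eq:
  assumes "walk V E p" "hd p = x" "last p = w" "gdist V E x w = 0"
  shows "x = w"
proof -
  have "\<exists>n q. walk V E q \<and> hd q = x \<and> last q = w \<and> length q = Suc n"
    using assms(1-3) by (intro exI[of _ "length p - 1"] exI[of _ p]) (auto simp: walk_def)
  from LeastI_ex[OF this] assms(4) obtain q where
    "walk V E q" "hd q = x" "last q = w" "length q = Suc 0"
    unfolding gdist_def by auto
  then show ?thesis by (cases q) auto
qed

lemma pos_nth:
  assumes "distinct P" "j < length P"
  shows "pos P (P ! j) = j"
  unfolding pos_def using assms by (intro the_equality) (auto simp: nth_eq_iff_index_eq)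

lemma nth_pos:
  assumes "distinct P" "x \<in> set P"
  shows "pos P x < length P" "P ! pos P x = x"
proof -
  obtain j where "j < length P" "P ! j = x" using assms(2) by (auto simp: in_set_conv_nth)
  then show "pos P x < length P" "P ! pos P x = x" using pos_nth[OF assms(1)] by auto
qed

lemma skel_m_in_landmarks:
  assumes "i \<le> Suc (length \<pi>)"
  shows "skel_m u v \<pi> i \<in> set (u # \<pi> @ [v])"
  unfolding skel_m_def using assms by (intro nth_mem) simp

lemma ex_crossing_step:
  fixes q :: "nat \<Rightarrow> 'b::linorder"
  assumes "q 0 \<le> j" "j < q n"
  shows "\<exists>i<n. q i \<le> j \<and> j < q (Suc i)"
  using assms(2)
proof (induction n)
  case 0
  then show ?case using assms(1) by simp
next
  case (Suc n)
  show ?case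
  proof (cases "j < q n")
    case True
    then show ?thesis using Suc.IH by (meson less_SucI)
  next
    case False
    then show ?thesis using Suc.prems by (intro exI[of _ n]) auto
  qed
qed

definition skel_locates :: "'a \<Rightarrow> 'a \<Rightarrow> 'a list \<Rightarrow> 'a list \<Rightarrow> gval \<Rightarrow> 'a \<Rightarrow> bool" where
  "skel_locates u v \<pi> P gv w \<longleftrightarrow> (case gv of
       GV i \<Rightarrow> i \<le> length \<pi> + 1 \<and> skel_m u v \<pi> i = w
     | GE i \<Rightarrow> i \<le> length \<pi> \<and> w \<in> inner_between P (skel_m u v \<pi> i) (skel_m u v \<pi> (Suc i)))"

text \<open>The landmarks need not occur on \<open>P\<close> in the order of \<open>\<pi>\<close>: \<open>inner_between\<close> is symmetric.\<close>

lemma inner_between_if_not_landmark: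
  assumes "distinct P" "P \<noteq> []" "hd P = u" "last P = v" "set \<pi> \<subseteq> set P"
    and "w \<in> set P" "w \<notin> set (u # \<pi> @ [v])"
  shows "\<exists>i\<le>length \<pi>. w \<in> inner_between P (skel_m u v \<pi> i) (skel_m u v \<pi> (Suc i))"
proof -
  define q where "q i = pos P (skel_m u v \<pi> i)" for i
  define j where "j = pos P w"
  have landmarks_on_P: "set (u # \<pi> @ [v]) \<subseteq> set P"
    using assms(2-5) by auto
  have q0: "q 0 = 0"
    using pos_nth[OF assms(1), of 0] assms(2,3) by (simp add: q_def skel_m_def hd_conv_nth)
  have qn: "q (Suc (length \<pi>)) = length P - 1"
    using pos_nth[OF assms(1), of "length P - 1"] assms(2,4)
    by (simp add: q_def skel_m_def nth_append last_conv_nth)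
  have j: "j < length P" "P ! j = w"
    using nth_pos[OF assms(1,6)] by (simp_all add: j_def)
  have "j \<noteq> length P - 1"
    using j assms(2,4,7) by (auto simp: last_conv_nth)
  with j(1) q0 qn obtain i where i: "i < Suc (length \<pi>)" "q i \<le> j" "j < q (Suc i)"
    using ex_crossing_step[of q j "Suc (length \<pi>)"] by fastforce
  have "q i \<noteq> j"
    using i(1) skel_m_in_landmarks[of i \<pi> u v] landmarks_on_P nth_pos[OF assms(1)] j assms(7)
    unfolding q_def by (metis less_imp_le_nat subsetD)
  with i j have "w \<in> inner_between P (skel_m u v \<pi> i) (skel_m u v \<pi> (Suc i))"
    unfolding inner_between_def q_def by (intro CollectI exI[of _ j]) auto
  with i(1) show ?thesis by (auto simp: less_Suc_eq_le)
qed

lemma ex_skel_locates: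
  assumes "distinct P" "P \<noteq> []" "hd P = u" "last P = v" "set \<pi> \<subseteq> set P" "w \<in> set P"
  shows "\<exists>gv. skel_locates u v \<pi> P gv w"
proof (cases "w \<in> set (u # \<pi> @ [v])")
  case True
  then obtain i where "i < length (u # \<pi> @ [v])" "(u # \<pi> @ [v]) ! i = w"
    by (auto simp: in_set_conv_nth simp del: list.set append.simps)
  then have "skel_locates u v \<pi> P (GV i) w" by (simp add: skel_locates_def skel_m_def)
  then show ?thesis ..
next
  case False
  then obtain i where "i \<le> length \<pi>"
    "w \<in> inner_between P (skel_m u v \<pi> i) (skel_m u v \<pi> (Suc i))"
    using inner_between_if_not_landmark[OF assms] by blast
  then have "skel_locates u v \<pi> P (GE i) w" by (simp add: skel_locates_def)
  then show ?thesis ..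
qed

lemma gdist_to_nearest_bounds:
  assumes "connected_graph V E" "set P \<subseteq> V" "P \<noteq> []"
    and cover: "\<forall>w\<in>V. \<exists>p\<in>set P. int (gdist V E w p) \<le> l"
    and "x \<in> V" "x \<notin> set P"
  shows "1 \<le> gdist V E x (arg_min_on (gdist V E x) (set P))"
    and "int (gdist V E x (arg_min_on (gdist V E x) (set P))) \<le> l"
proof -
  let ?y = "arg_min_on (gdist V E x) (set P)"
  have y: "?y \<in> set P" using arg_min_if_finite(1)[of "set P"] assms(3) by simp
  with assms(2) have "?y \<in> V" by blast
  with assms(1,5) obtain p where "walk V E p" "hd p = x" "last p = ?y"
    unfolding connected_graph_def by blast
  then have "gdist V E x ?y \<noteq> 0"
    using gdist_eq_0_imp_eq y assms(6) by (metis (no_types))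
  then show "1 \<le> gdist V E x ?y" by simp
  obtain w where "w \<in> set P" "int (gdist V E x w) \<le> l" using cover assms(5) by blast
  then show "int (gdist V E x ?y) \<le> l"
    using arg_min_least[of "set P" w "gdist V E x"] assms(3) by simp
qed

lemma covering_path_realizes_skeleton:
  assumes "connected_graph V E" "S \<subseteq> V" "is_path V E P"
    and cover: "\<forall>w\<in>V. \<exists>p\<in>set P. int (gdist V E w p) \<le> l"
  defines "u \<equiv> hd P" and "v \<equiv> last P"
  shows "\<exists>\<pi> f g. is_skeleton V E S l u v \<pi> f g \<and> realizes V E S l u v \<pi> f g P"
proof -
  have P: "distinct P" "P \<noteq> []" "set P \<subseteq> V"
    using assms(3) by (auto simp: is_path_def walk_def)
  define \<pi> where "\<pi> = filter (\<lambda>y. y \<in> S - {u, v}) P"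
  define nearest where "nearest x = arg_min_on (gdist V E x) (set P)" for x
  define f where "f x = gdist V E x (nearest x)" for x
  define g where "g x = (SOME gv. skel_locates u v \<pi> P gv (nearest x))" for x
  have set_\<pi>: "set \<pi> = (S - {u, v}) \<inter> set P" by (auto simp: \<pi>_def)
  have X_off_P: "skel_X S u v \<pi> \<inter> set P = {}" by (auto simp: skel_X_def set_\<pi>)
  have nearest_on_P: "nearest x \<in> set P" for x
    using arg_min_if_finite(1)[of "set P"] P(2) by (simp add: nearest_def)
  have f_le: "f x \<le> gdist V E x w" if "w \<in> set P" for x w
    using arg_min_least[of "set P" w] that P(2) by (simp add: f_def nearest_def)
  have g: "skel_locates u v \<pi> P (g x) (nearest x)" for x
    unfolding g_def
    by (rule someI_ex, rule ex_skel_locates) (use P nearest_on_P in \<open>auto simp: u_def v_def \<pi>_def\<close>)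
  have "is_skeleton V E S l u v \<pi> f g"
    unfolding is_skeleton_def
  proof (intro conjI ballI)
    show "u \<in> V" "v \<in> V" using P by (auto simp: u_def v_def)
    show "distinct \<pi>" using P(1) by (simp add: \<pi>_def)
    show "set \<pi> \<subseteq> S - {u, v}" using set_\<pi> by auto
  next
    fix x assume "x \<in> skel_X S u v \<pi>"
    then have "x \<in> V" "x \<notin> set P" using assms(2) X_off_P by (auto simp: skel_X_def)
    from gdist_to_nearest_bounds[OF assms(1) P(3,2) cover this]
    show "1 \<le> f x" "int (f x) \<le> l" by (simp_all add: f_def nearest_def)
  next
    fix x
    show "case g x of GV i \<Rightarrow> i \<le> length \<pi> + 1 | GE i \<Rightarrow> i \<le> length \<pi>"
      using g[of x] by (cases "g x") (auto simp: skel_locates_def)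
  qed
  moreover have "realizes V E S l u v \<pi> f g P"
    unfolding realizes_def
  proof (intro conjI ballI)
    show "set \<pi> = (S - {u, v}) \<inter> set P" by (rule set_\<pi>)
    show "skel_X S u v \<pi> \<inter> set P = {}" by (rule X_off_P)
    show "subseq \<pi> P" by (simp add: \<pi>_def)
    show "hd P = u" "last P = v" by (simp_all add: u_def v_def)
  next
    fix w assume "w \<in> V" then show "\<exists>p\<in>set P. int (gdist V E w p) \<le> l" using cover by blast
  next
    fix x w assume "w \<in> set P" then show "f x \<le> gdist V E x w" by (rule f_le)
  next
    fix x
    show "case g x of GV i \<Rightarrow> gdist V E x (skel_m u v \<pi> i) = f x
        | GE i \<Rightarrow> (\<exists>w \<in> inner_between P (skel_m u v \<pi> i) (skel_m u v \<pi> (Suc i)).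
                     gdist V E x w = f x)"
      using g[of x] by (cases "g x") (auto simp: skel_locates_def f_def)
  qed
  ultimately show ?thesis by blast
qed

theorem lemma3:
  fixes V :: "'a set" and E :: "'a \<Rightarrow> 'a \<Rightarrow> bool" and S :: "'a set"
    and k :: nat and l :: int
  assumes "simple_graph V E"
    and "connected_graph V E"
    and "S \<subseteq> V"
    and "card S = k"
    and "forest_minus V E S"
  shows "(\<exists>P. shortest_path V E P \<and> (\<forall>w\<in>V. \<exists>p\<in>set P. int (gdist V E w p) \<le> l))
     \<longleftrightarrow> (\<exists>u v \<pi> f g P. is_skeleton V E S l u v \<pi> f g \<and> shortest_path V E P
             \<and> realizes V E S l u v \<pi> f g P)"
proof
  assume "\<exists>P. shortest_path V E P \<and> (\<forall>w\<in>V. \<exists>p\<in>set P. int (gdist V E w p) \<le> l)"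
  then obtain P where "shortest_path V E P" "\<forall>w\<in>V. \<exists>p\<in>set P. int (gdist V E w p) \<le> l"
    by blast
  with covering_path_realizes_skeleton[OF assms(2,3)] show
    "\<exists>u v \<pi> f g P. is_skeleton V E S l u v \<pi> f g \<and> shortest_path V E P
       \<and> realizes V E S l u v \<pi> f g P"
    unfolding shortest_path_def by blast
next
  assume "\<exists>u v \<pi> f g P. is_skeleton V E S l u v \<pi> f g \<and> shortest_path V E P
            \<and> realizes V E S l u v \<pi> f g P"
  then show "\<exists>P. shortest_path V E P \<and> (\<forall>w\<in>V. \<exists>p\<in>set P. int (gdist V E w p) \<le> l)"
    unfolding realizes_def by blast
qed

end
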